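(* Let $Y(0),Y(1)$ be integrable real-valued random variables, $\tau=Y(1)-Y(0)$, and $X$ a random vector with support $\mathcal{X}$. Each of the following two conditions implies that for all $x_1,x_2\in\mathcal{X}$, $$E[Y(0)|X=x_1]\geq E[Y(0)|X=x_2]\iff E[Y(1)|X=x_1]\geq E[Y(1)|X=x_2].$$ (a) For all $x_1,x_2\in\mathcal{X}$: $E[Y(0)|X=x_1]\geq E[Y(0)|X=x_2]\implies E[\tau|X=x_1]\geq E[\tau|X=x_2]$. (b) For all $x_1,x_2\in\mathcal{X}$: $|E[\tau|X=x_1]-E[\tau|X=x_2]|\leq|E[Y(0)|X=x_2]-E[Y(0)|X=x_1]|$, with strict inequality whenever the right-hand side is nonzero.
   Context: Conditional expectations $x\mapsto E[\cdot|X=x]$ are fixed functions on $\mathcal{X}$ (e.g. continuous versions), with $E[\tau|X=x]=E[Y(1)|X=x]-E[Y(0)|X=x]$. *)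

theory Defs
  imports "HOL-Probability.Probability"
begin

definition rv_support :: "'w measure \<Rightarrow> ('w \<Rightarrow> 'x::metric_space) \<Rightarrow> 'x set" where
  "rv_support M X = {x. \<forall>e>0. measure M (X -` ball x e \<inter> space M) > 0}"

end

theory Submission
  imports Defs
begin

text \<open>Since \<open>m1 = m0 + mt\<close>, both conditions say that adding \<open>mt\<close> to \<open>m0\<close> can never reverse
  (or create) a strict order between two values of \<open>m0\<close>: under (a) because \<open>mt\<close> moves in the same
  direction as \<open>m0\<close>, under (b) because the change in \<open>mt\<close> is strictly smaller than the change in
  \<open>m0\<close> whenever the latter is nonzero.\<close>

lemma ge_iff_add_ge_if_comonotone:
  fixes a b s t :: "'a::linordered_ab_group_add"
  assumes "b \<le> a \<Longrightarrow> t \<le> s" and "a \<le> b \<Longrightarrow> s \<le> t"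
  shows "b \<le> a \<longleftrightarrow> b + t \<le> a + s"
proof
  assume "b \<le> a"
  with assms(1) show "b + t \<le> a + s"
    by (simp add: add_mono)
next
  assume sum_le: "b + t \<le> a + s"
  show "b \<le> a"
  proof (rule ccontr)
    assume "\<not> b \<le> a"
    then have "a < b" by simp
    with assms(2) have "a + s < b + t"
      by (simp add: add_less_le_mono)
    with sum_le show False by simp
  qed
qed

lemma ge_iff_add_ge_if_dominated:
  fixes a b s t :: "'a::{linordered_ab_group_add, ordered_ab_group_add_abs}"
  assumes "\<bar>s - t\<bar> \<le> \<bar>b - a\<bar>" and "\<bar>b - a\<bar> \<noteq> 0 \<longrightarrow> \<bar>s - t\<bar> < \<bar>b - a\<bar>"
  shows "b \<le> a \<longleftrightarrow> b + t \<le> a + s"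
proof
  assume "b \<le> a"
  then have "\<bar>b - a\<bar> = a - b"
    by (simp add: abs_minus_commute)
  moreover have "t - s \<le> \<bar>s - t\<bar>"
    by (metis abs_ge_minus_self minus_diff_eq)
  ultimately have "t - s \<le> a - b"
    using assms(1) by order
  then show "b + t \<le> a + s"
    by (simp add: algebra_simps le_diff_eq)
next
  assume sum_le: "b + t \<le> a + s"
  show "b \<le> a"
  proof (rule ccontr)
    assume "\<not> b \<le> a"
    then have "\<bar>b - a\<bar> = b - a" and "\<bar>b - a\<bar> \<noteq> 0"
      by simp_all
    with assms(2) have "\<bar>s - t\<bar> < b - a"
      by simp
    moreover have "s - t \<le> \<bar>s - t\<bar>"
      by (rule abs_ge_self)
    ultimately have "s - t < b - a"
      by order
    then have "a + s < b + t"
      by (simp add: algebra_simps less_diff_eq)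
    with sum_le show False by simp
  qed
qed

theorem proposition1:
  fixes M :: "'w measure" and Y0 Y1 :: "'w \<Rightarrow> real"
    and X :: "'w \<Rightarrow> 'x::euclidean_space"
    and m0 m1 mt :: "'x \<Rightarrow> real"
  assumes "prob_space M"
    and "integrable M Y0" and "integrable M Y1"
    and "X \<in> borel_measurable M"
    and "m0 \<in> borel_measurable borel" and "m1 \<in> borel_measurable borel"
    and "AE \<omega> in M. m0 (X \<omega>) = real_cond_exp M (vimage_algebra (space M) X borel) Y0 \<omega>"
    and "AE \<omega> in M. m1 (X \<omega>) = real_cond_exp M (vimage_algebra (space M) X borel) Y1 \<omega>"
    and "\<And>x. mt x = m1 x - m0 x"
  shows "((\<forall>x1\<in>rv_support M X. \<forall>x2\<in>rv_support M X. m0 x1 \<ge> m0 x2 \<longrightarrow> mt x1 \<ge> mt x2)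
            \<longrightarrow> (\<forall>x1\<in>rv_support M X. \<forall>x2\<in>rv_support M X. m0 x1 \<ge> m0 x2 \<longleftrightarrow> m1 x1 \<ge> m1 x2))
       \<and> ((\<forall>x1\<in>rv_support M X. \<forall>x2\<in>rv_support M X.
              \<bar>mt x1 - mt x2\<bar> \<le> \<bar>m0 x2 - m0 x1\<bar>
              \<and> (\<bar>m0 x2 - m0 x1\<bar> \<noteq> 0 \<longrightarrow> \<bar>mt x1 - mt x2\<bar> < \<bar>m0 x2 - m0 x1\<bar>))
            \<longrightarrow> (\<forall>x1\<in>rv_support M X. \<forall>x2\<in>rv_support M X. m0 x1 \<ge> m0 x2 \<longleftrightarrow> m1 x1 \<ge> m1 x2))"
proof -
  have m1_eq: "m1 x = m0 x + mt x" for x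
    using assms(9) by simp
  show ?thesis
  proof (intro conjI impI ballI)
    fix x1 x2
    assume "\<forall>x1\<in>rv_support M X. \<forall>x2\<in>rv_support M X. m0 x1 \<ge> m0 x2 \<longrightarrow> mt x1 \<ge> mt x2"
      and "x1 \<in> rv_support M X" "x2 \<in> rv_support M X"
    then show "m0 x1 \<ge> m0 x2 \<longleftrightarrow> m1 x1 \<ge> m1 x2"
      unfolding m1_eq by (intro ge_iff_add_ge_if_comonotone) blast+
  next
    fix x1 x2
    assume "\<forall>x1\<in>rv_support M X. \<forall>x2\<in>rv_support M X.
              \<bar>mt x1 - mt x2\<bar> \<le> \<bar>m0 x2 - m0 x1\<bar>
              \<and> (\<bar>m0 x2 - m0 x1\<bar> \<noteq> 0 \<longrightarrow> \<bar>mt x1 - mt x2\<bar> < \<bar>m0 x2 - m0 x1\<bar>)"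
      and "x1 \<in> rv_support M X" "x2 \<in> rv_support M X"
    then show "m0 x1 \<ge> m0 x2 \<longleftrightarrow> m1 x1 \<ge> m1 x2"
      unfolding m1_eq by (intro ge_iff_add_ge_if_dominated) blast+
  qed
qed

end
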